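(* Let $B, C \in \mathbb{Z}$ be such that $x^2 + Bx + C$ is irreducible, and let $\beta$ be a real root of it. (i) If $B \geq 0$ and $C > 0$, then $p_\beta(\alpha) = \infty$ for all $\alpha \in \mathbb{Z}[\beta]$. (ii) If $B > 0$ and $-B - 1 < C < 0$, then $p_\beta(\alpha) \in \{0, 1, \infty\}$ for every $\alpha \in \mathbb{R}$. Moreover, if $\alpha = c_j\beta^j + c_{j-1}\beta^{j-1} + \dots + c_1\beta + c_0$ with all $c_i \in \mathbb{Z}_{\geq 0}$, then $p_\beta(\alpha) = 1$ if and only if $c_i \in \{0, 1, \ldots, -C-1\}$ for every $i$.
   Context: For $\beta, \alpha \in \mathbb{C}$, $p_\beta(\alpha) \in \mathbb{Z}_{\geq 0}\cup\{\infty\}$ is the number of polynomials $f \in \mathbb{Z}_{\geq 0}[x]$ (non-negative integer coefficients) with $f(\beta) = \alpha$. *)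

theory Defs
  imports Complex_Main "HOL-Computational_Algebra.Polynomial" "HOL-Library.Extended_Nat"
begin

definition p_count :: "complex \<Rightarrow> complex \<Rightarrow> enat" where
  "p_count \<beta> \<alpha> =
     (let S = {f :: nat poly. poly (map_poly of_nat f) \<beta> = \<alpha>}
      in if finite S then enat (card S) else \<infinity>)"

end

theory Submission
  imports Defs
begin

(*
  Write R(alpha) = nonneg_reps beta alpha for the set of polynomials with non-negative integer
  coefficients taking the value alpha at beta, so that p_beta(alpha) is its cardinality.

  If C > 0, then -1 = beta^2 + B beta + (C - 1) lies in R(-1), hence every element of Z[beta]
  has a representation, and adding multiples of x^2 + B x + C, which lies in R(0), yields
  infinitely many.

  If -B <= C < 0, then beta is irrational and x^2 + B x + C is its minimal polynomial, so two
  representations of the same number differ by a multiple (x^2 + B x + C) s. Every nonzero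
  such multiple has a coefficient >= -C (look at the least negative coefficient of s, or at
  the leading one if there is none), so a representation with all digits in {0, ..., -C-1}
  is the only one. Conversely a digit >= -C can be carried forever: adding
  (x^2 + B x + C)(x^k + ... + x^(k+t-1)) keeps all digits non-negative for every t.
*)

lemma map_poly_of_nat_add:
  "map_poly (of_nat :: nat \<Rightarrow> 'a::comm_semiring_1) (p + q) = map_poly of_nat p + map_poly of_nat q"
  by (intro poly_eqI) (simp add: coeff_map_poly)

lemma map_poly_of_nat_mult:
  "map_poly (of_nat :: nat \<Rightarrow> 'a::comm_semiring_1) (p * q) = map_poly of_nat p * map_poly of_nat q"
  by (intro poly_eqI) (simp add: coeff_map_poly coeff_mult)

lemma map_poly_of_int_add:
  "map_poly (of_int :: int \<Rightarrow> 'a::comm_ring_1) (p + q) = map_poly of_int p + map_poly of_int q"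
  by (intro poly_eqI) (simp add: coeff_map_poly)

lemma map_poly_of_int_diff:
  "map_poly (of_int :: int \<Rightarrow> 'a::comm_ring_1) (p - q) = map_poly of_int p - map_poly of_int q"
  by (intro poly_eqI) (simp add: coeff_map_poly)

lemma map_poly_of_int_mult:
  "map_poly (of_int :: int \<Rightarrow> 'a::comm_ring_1) (p * q) = map_poly of_int p * map_poly of_int q"
  by (intro poly_eqI) (simp add: coeff_map_poly coeff_mult)

lemma map_poly_of_int_of_nat:
  "map_poly (of_int :: int \<Rightarrow> 'a::comm_ring_1) (map_poly int p) = map_poly of_nat p"
  by (simp add: map_poly_map_poly o_def)

lemma map_poly_int_nat:
  assumes "\<And>n. coeff p n \<ge> 0"
  shows "map_poly int (map_poly nat p) = p"
  by (intro poly_eqI) (simp add: coeff_map_poly assms)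

lemma poly_map_poly_of_int_quadratic:
  "poly (map_poly of_int [:C, B, 1:]) \<beta> = \<beta>\<^sup>2 + of_int B * \<beta> + (of_int C :: 'a::comm_ring_1)"
  by (simp add: map_poly_pCons power2_eq_square algebra_simps)

lemma coeff_quadratic_mult:
  "coeff ([:a, b, c:] * q) n =
     a * coeff q n + (if n = 0 then 0 else b * coeff q (n - 1))
       + (if n < 2 then 0 else c * coeff q (n - 2))"
  by (cases n; cases "n - 1") (auto simp: coeff_pCons add.assoc)

definition nonneg_reps :: "'a::comm_semiring_1 \<Rightarrow> 'a \<Rightarrow> nat poly set" where
  "nonneg_reps \<beta> \<alpha> = {f. poly (map_poly of_nat f) \<beta> = \<alpha>}"

lemma p_count_conv_nonneg_reps:
  "p_count \<beta> \<alpha> =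
     (if finite (nonneg_reps \<beta> \<alpha>) then enat (card (nonneg_reps \<beta> \<alpha>)) else \<infinity>)"
  by (simp add: p_count_def nonneg_reps_def)

lemma nonneg_reps_of_real:
  "nonneg_reps (of_real \<beta> :: 'a::{real_algebra_1, comm_ring_1}) (of_real \<alpha>) = nonneg_reps \<beta> \<alpha>"
proof -
  have "poly (map_poly of_nat f) (of_real \<beta> :: 'a) = of_real (poly (map_poly of_nat f) \<beta>)" for f
    by (induction f) (simp_all add: map_poly_pCons)
  then show ?thesis
    by (simp add: nonneg_reps_def)
qed

lemma nonneg_reps_of_int_poly_nonempty:
  fixes \<beta> :: "'a::comm_ring_1"
  assumes m: "poly (map_poly of_nat m) \<beta> = -1"
  shows "nonneg_reps \<beta> (poly (map_poly of_int g) \<beta>) \<noteq> {}"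
proof -
  define g_pos where "g_pos = map_poly nat g"
  define g_neg where "g_neg = map_poly (\<lambda>a. nat (- a)) g"
  have "of_int a = (of_nat (nat a) - of_nat (nat (- a)) :: 'a)" for a
    by (cases "a \<ge> 0") (simp_all add: of_nat_nat)
  then have "map_poly of_int g = (map_poly of_nat g_pos - map_poly of_nat g_neg :: 'a poly)"
    by (intro poly_eqI) (simp add: g_pos_def g_neg_def coeff_map_poly)
  then have "g_pos + g_neg * m \<in> nonneg_reps \<beta> (poly (map_poly of_int g) \<beta>)"
    by (simp add: nonneg_reps_def map_poly_of_nat_add map_poly_of_nat_mult m)
  then show ?thesis
    by blast
qed

lemma infinite_nonneg_reps_if_zero_rep:
  fixes \<beta> :: "'a::comm_semiring_1"
  assumes "z \<noteq> 0" and z: "poly (map_poly of_nat z) \<beta> = 0" and f: "f \<in> nonneg_reps \<beta> \<alpha>"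
  shows "infinite (nonneg_reps \<beta> \<alpha>)"
proof -
  have "inj (\<lambda>k. f + smult k z)"
  proof (rule injI)
    fix k l :: nat
    assume "f + smult k z = f + smult l z"
    then have "k * lead_coeff z = l * lead_coeff z"
      by (metis add_left_imp_eq coeff_smult)
    then show "k = l"
      using \<open>z \<noteq> 0\<close> by simp
  qed
  moreover have "range (\<lambda>k. f + smult k z) \<subseteq> nonneg_reps \<beta> \<alpha>"
    using f z by (auto simp: nonneg_reps_def map_poly_of_nat_add map_poly_smult)
  ultimately show ?thesis
    using range_inj_infinite infinite_super by blast
qed

lemma infinite_nonneg_reps_of_int_poly:
  fixes \<beta> :: "'a::comm_ring_1"
  assumes root: "\<beta>\<^sup>2 + of_int B * \<beta> + of_int C = 0"
    and "B \<ge> 0" "C > 0"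
  shows "infinite (nonneg_reps \<beta> (poly (map_poly of_int g) \<beta>))"
proof -
  have minus_one: "poly (map_poly of_nat [:nat (C - 1), nat B, 1:]) \<beta> = -1"
    and zero: "poly (map_poly of_nat [:nat C, nat B, 1:]) \<beta> = 0"
    using assms by (simp_all add: map_poly_pCons power2_eq_square algebra_simps)
  obtain f where "f \<in> nonneg_reps \<beta> (poly (map_poly of_int g) \<beta>)"
    using nonneg_reps_of_int_poly_nonempty[OF minus_one] by blast
  with infinite_nonneg_reps_if_zero_rep[OF _ zero] show ?thesis
    by simp
qed

lemma quadratic_root_not_rat:
  fixes \<beta> :: "'a::field_char_0"
  assumes irr: "irreducible [:C, B, 1:]"
    and root: "\<beta>\<^sup>2 + of_int B * \<beta> + of_int C = 0"
  shows "\<beta> \<notin> \<rat>"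
proof
  assume "\<beta> \<in> \<rat>"
  have "poly (map_poly of_int [:C, B, 1:]) \<beta> = 0"
    using root by (simp only: poly_map_poly_of_int_quadratic)
  then have "algebraic_int \<beta>"
    by (auto simp: algebraic_int_altdef_ipoly)
  with \<open>\<beta> \<in> \<rat>\<close> obtain a where "\<beta> = of_int a"
    by (metis rational_algebraic_int_is_int Ints_cases)
  with root have "of_int (a\<^sup>2 + B * a + C) = (0 :: 'a)"
    by simp
  then have "C = - a\<^sup>2 - B * a"
    by (simp only: of_int_eq_0_iff)
  then have "[:C, B, 1:] = [:- a, 1:] * [:a + B, 1:]"
    by (simp add: power2_eq_square algebra_simps)
  with irr have "is_unit [:- a, 1:] \<or> is_unit [:a + B, 1:]"
    by (simp add: irreducibleD)
  then show False
    by (auto simp: is_unit_poly_iff)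
qed

lemma quadratic_dvd_if_root:
  fixes \<beta> :: "'a::field_char_0"
  assumes irr: "irreducible [:C, B, 1:]"
    and root: "\<beta>\<^sup>2 + of_int B * \<beta> + of_int C = 0"
    and d: "poly (map_poly of_int d) \<beta> = 0"
  shows "[:C, B, 1:] dvd d"
proof -
  let ?m = "[:C, B, 1:]"
  obtain q r where "pseudo_divmod d ?m = (q, r)"
    by fastforce
  from pseudo_divmod[OF _ this] have d_eq: "d = ?m * q + r" and "r = 0 \<or> degree r < 2"
    by (simp_all del: mult_pCons_left add: numeral_2_eq_2)
  then have r_eq: "r = [:coeff r 0, coeff r 1:]"
    by (intro poly_eqI) (auto simp: coeff_pCons coeff_eq_0 split: nat.split)
  have "poly (map_poly of_int r) \<beta> = 0"
    using d root
    by (simp del: mult_pCons_left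
        add: d_eq map_poly_of_int_add map_poly_of_int_mult poly_map_poly_of_int_quadratic)
  then have lin: "of_int (coeff r 0) + of_int (coeff r 1) * \<beta> = 0"
    by (subst (asm) r_eq) (simp add: map_poly_pCons mult.commute)
  have "coeff r 1 = 0"
  proof (rule ccontr)
    assume "coeff r 1 \<noteq> 0"
    with lin have "\<beta> = - of_int (coeff r 0) / of_int (coeff r 1)"
      by (simp add: field_simps add_eq_0_iff2)
    with quadratic_root_not_rat[OF irr root] show False
      by simp
  qed
  with lin r_eq have "r = 0"
    by simp
  with d_eq show ?thesis
    by (metis add.right_neutral dvd_triv_left)
qed

lemma quadratic_multiple_has_large_coeff:
  fixes B C :: int
  assumes "C < 0" "B + C \<ge> 0" "s \<noteq> 0"
  shows "\<exists>n. coeff ([:C, B, 1:] * s) n \<ge> - C"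
proof (cases "\<exists>n. coeff s n < 0")
  case True
  then obtain n where neg: "coeff s n < 0" and below: "\<forall>i<n. coeff s i \<ge> 0"
    by (auto simp: exists_least_iff[of "\<lambda>n. coeff s n < 0"] not_less)
  have "- C \<le> C * coeff s n"
    using mult_left_mono_neg[of "coeff s n" "-1" C] neg \<open>C < 0\<close> by simp
  also have "\<dots> \<le> coeff ([:C, B, 1:] * s) n"
    unfolding coeff_quadratic_mult using below assms by auto
  finally show ?thesis ..
next
  case False
  define N where "N = degree s"
  have "coeff s N > 0"
    using False \<open>s \<noteq> 0\<close> by (metis N_def leading_coeff_0_iff not_less order_le_less)
  then have "- C \<le> B * coeff s N"
    using assms by (smt (verit) mult_le_cancel_left1)
  also have "\<dots> \<le> coeff ([:C, B, 1:] * s) (Suc N)"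
    unfolding coeff_quadratic_mult using False by (auto simp: N_def coeff_eq_0 not_less)
  finally show ?thesis ..
qed

lemma nonneg_reps_bounded_digits:
  fixes \<beta> :: "'a::field_char_0"
  assumes irr: "irreducible [:C, B, 1:]"
    and root: "\<beta>\<^sup>2 + of_int B * \<beta> + of_int C = 0"
    and "C < 0" "B + C \<ge> 0"
    and bounded: "\<forall>i. int (coeff c i) \<le> - C - 1"
  shows "nonneg_reps \<beta> (poly (map_poly of_nat c) \<beta>) = {c}"
proof -
  have "g = c" if g: "poly (map_poly of_nat g) \<beta> = poly (map_poly of_nat c) \<beta>" for g
  proof -
    define d where "d = map_poly int c - map_poly int g"
    have coeff_d: "coeff d n = int (coeff c n) - int (coeff g n)" for n
      by (simp add: d_def coeff_map_poly)
    have "poly (map_poly of_int d) \<beta> = 0"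
      using g by (simp add: d_def map_poly_of_int_diff map_poly_of_int_of_nat)
    then obtain s where s: "d = [:C, B, 1:] * s"
      using quadratic_dvd_if_root[OF irr root] by blast
    have small: "coeff d n < - C" for n
      using bounded[rule_format, of n] coeff_d[of n] of_nat_0_le_iff[of "coeff g n"] by linarith
    have "s = 0"
    proof (rule ccontr)
      assume "s \<noteq> 0"
      with quadratic_multiple_has_large_coeff[OF \<open>C < 0\<close> \<open>B + C \<ge> 0\<close>] s small
      show False
        using not_less by blast
    qed
    with s coeff_d show "g = c"
      by (intro poly_eqI) simp
  qed
  then show ?thesis
    by (auto simp: nonneg_reps_def)
qed

lemma infinite_nonneg_reps_if_large_digit:
  fixes \<beta> :: "'a::comm_ring_1"
  assumes root: "\<beta>\<^sup>2 + of_int B * \<beta> + of_int C = 0"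
    and "C \<le> 0" "B + C \<ge> 0"
    and large: "- C \<le> int (coeff h k)"
  shows "infinite (nonneg_reps \<beta> (poly (map_poly of_nat h) \<beta>))"
proof -
  define block :: "nat \<Rightarrow> int poly" where "block t = (\<Sum>j<t. monom 1 (k + j))" for t
  have coeff_block: "coeff (block t) n = (if k \<le> n \<and> n < k + t then 1 else 0)" for t n
    by (induction t) (auto simp: block_def coeff_monom)
  define G where "G t = map_poly int h + [:C, B, 1:] * block t" for t
  \<comment> \<open>digit k absorbs C, the other digits gain B + C, B, 1 or nothing\<close>
  have G_nonneg: "coeff (G t) n \<ge> 0" for t n
    using large assms unfolding G_def coeff_add coeff_quadratic_mult coeff_block
    by (cases "n = k") (auto simp: coeff_map_poly)
  have "inj block"
  proof (rule injI)
    fix s t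
    assume "block s = block t"
    then have "coeff (block s) (k + min s t) = coeff (block t) (k + min s t)"
      by simp
    then show "s = t"
      by (auto simp: coeff_block min_def split: if_splits)
  qed
  then have "inj G"
    unfolding inj_def G_def by (simp del: mult_pCons_left add: inj_eq)
  define f where "f t = map_poly nat (G t)" for t
  have G_eq: "map_poly int (f t) = G t" for t
    by (simp add: f_def map_poly_int_nat G_nonneg)
  have "inj f"
    using \<open>inj G\<close> by (metis G_eq injD injI)
  moreover have "range f \<subseteq> nonneg_reps \<beta> (poly (map_poly of_nat h) \<beta>)"
  proof -
    have "poly (map_poly of_nat (f t)) \<beta> = poly (map_poly of_nat h) \<beta>" for t
    proof -
      have "poly (map_poly of_nat (f t)) \<beta> = poly (map_poly of_int (G t)) \<beta>"
        by (simp only: G_eq[symmetric] map_poly_of_int_of_nat)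
      also have "\<dots> = poly (map_poly of_nat h) \<beta>"
        using root
        by (simp del: mult_pCons_left add: G_def map_poly_of_int_add map_poly_of_int_mult
            poly_map_poly_of_int_quadratic map_poly_of_int_of_nat)
      finally show ?thesis .
    qed
    then show ?thesis
      by (auto simp: nonneg_reps_def)
  qed
  ultimately show ?thesis
    using range_inj_infinite infinite_super by blast
qed

lemma card_nonneg_reps_le_1:
  fixes \<beta> :: "'a::field_char_0"
  assumes irr: "irreducible [:C, B, 1:]"
    and root: "\<beta>\<^sup>2 + of_int B * \<beta> + of_int C = 0"
    and "C < 0" "B + C \<ge> 0"
    and fin: "finite (nonneg_reps \<beta> \<alpha>)"
  shows "card (nonneg_reps \<beta> \<alpha>) \<le> 1"
proof -
  have "g = f" if f: "f \<in> nonneg_reps \<beta> \<alpha>" and g: "g \<in> nonneg_reps \<beta> \<alpha>" for f g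
  proof (cases "\<forall>i. int (coeff f i) \<le> - C - 1")
    case True
    with nonneg_reps_bounded_digits[OF irr root \<open>C < 0\<close> \<open>B + C \<ge> 0\<close>] f g show ?thesis
      by (auto simp: nonneg_reps_def)
  next
    case False
    then obtain k where "- C \<le> int (coeff f k)"
      by (metis linorder_not_le zle_diff1_eq)
    with infinite_nonneg_reps_if_large_digit[OF root] assms f have "infinite (nonneg_reps \<beta> \<alpha>)"
      by (auto simp: nonneg_reps_def)
    with fin show ?thesis
      by contradiction
  qed
  with fin show ?thesis
    by (simp add: card_le_Suc0_iff_eq)
qed

theorem proposition8:
  fixes B C :: int and \<beta> :: real
  assumes irr: "irreducible [:C, B, 1:]"
    and root: "\<beta>\<^sup>2 + of_int B * \<beta> + of_int C = 0"
  shows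
    "(B \<ge> 0 \<and> C > 0 \<longrightarrow>
        (\<forall>g :: int poly. p_count (complex_of_real \<beta>)
                              (complex_of_real (poly (map_poly of_int g) \<beta>)) = \<infinity>))
     \<and>
     (B > 0 \<and> - B - 1 < C \<and> C < 0 \<longrightarrow>
        (\<forall>\<alpha> :: real. p_count (complex_of_real \<beta>) (complex_of_real \<alpha>) \<in> {0, 1, \<infinity>})
        \<and> (\<forall>c :: nat poly.
              p_count (complex_of_real \<beta>) (complex_of_real (poly (map_poly of_nat c) \<beta>)) = 1
              \<longleftrightarrow> (\<forall>i. int (coeff c i) \<le> - C - 1)))"
proof (intro conjI impI allI)
  fix g :: "int poly"
  assume "0 \<le> B \<and> 0 < C"
  with infinite_nonneg_reps_of_int_poly[OF root]
  show "p_count (complex_of_real \<beta>) (complex_of_real (poly (map_poly of_int g) \<beta>)) = \<infinity>"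
    by (simp add: p_count_conv_nonneg_reps nonneg_reps_of_real)
next
  fix \<alpha> :: real
  assume "0 < B \<and> - B - 1 < C \<and> C < 0"
  then have "card (nonneg_reps \<beta> \<alpha>) \<le> 1" if "finite (nonneg_reps \<beta> \<alpha>)"
    using card_nonneg_reps_le_1[OF irr root _ _ that] by simp
  then show "p_count (complex_of_real \<beta>) (complex_of_real \<alpha>) \<in> {0, 1, \<infinity>}"
    by (auto simp: p_count_conv_nonneg_reps nonneg_reps_of_real le_Suc_eq one_enat_def zero_enat_def)
next
  fix c :: "nat poly"
  assume BC: "0 < B \<and> - B - 1 < C \<and> C < 0"
  show "p_count (complex_of_real \<beta>) (complex_of_real (poly (map_poly of_nat c) \<beta>)) = 1
      \<longleftrightarrow> (\<forall>i. int (coeff c i) \<le> - C - 1)"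
  proof (cases "\<forall>i. int (coeff c i) \<le> - C - 1")
    case True
    with nonneg_reps_bounded_digits[OF irr root] BC show ?thesis
      by (simp add: p_count_conv_nonneg_reps nonneg_reps_of_real one_enat_def)
  next
    case False
    then obtain k where "- C \<le> int (coeff c k)"
      by (metis linorder_not_le zle_diff1_eq)
    with infinite_nonneg_reps_if_large_digit[OF root] BC False show ?thesis
      by (simp add: p_count_conv_nonneg_reps nonneg_reps_of_real)
  qed
qed

end
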